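(* Assume the standing assumptions below. Let $X_k\in\mathbb{R}^{n\times n}$ be symmetric with $X_k\succeq0$, and let $X_{k+1}$ be a symmetric matrix satisfying the Lyapunov equation $$\widehat A_k^{\mathsf T}X_{k+1}+X_{k+1}\widehat A_k+\widehat\Pi_k(X_k)+M_k=0,$$ where $R_k=R+\Pi_{22}(X_k)$, $S_k=X_kB+L+\Pi_{12}(X_k)$, $\widehat A_k=A-BR_k^{-1}S_k^{\mathsf T}$ $(=A_{\mathrm c}(X_k)-G_{\mathrm c}(X_k)X_k)$, $P_k=\begin{bmatrix}I_n\\-R_k^{-1}S_k^{\mathsf T}\end{bmatrix}$, $\widehat\Pi_k(X)=P_k^{\mathsf T}\Pi(X)P_k$, and $M_k=P_k^{\mathsf T}\begin{bmatrix}Q&L\\L^{\mathsf T}&R\end{bmatrix}P_k$. Then $A_{\mathrm c}(X_k)-G_{\mathrm c}(X_k)X_k$ is stable if and only if $X_{k+1}\succeq0$.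
   Context: Data: $A,Q\in\mathbb{R}^{n\times n}$, $B,L\in\mathbb{R}^{n\times m}$, $R\in\mathbb{R}^{m\times m}$, $A_0^i\in\mathbb{R}^{n\times n}$, $B_0^i\in\mathbb{R}^{n\times m}$ ($i=1,\dots,r$); $A_0^0=A$, $B_0^0=B$. For symmetric $X$: $\Pi(X)=\begin{bmatrix}\Pi_{11}(X)&\Pi_{12}(X)\\\Pi_{12}(X)^{\mathsf T}&\Pi_{22}(X)\end{bmatrix}$ with $\Pi_{11}(X)=\sum_{i=1}^r (A_0^i)^{\mathsf T}XA_0^i$, $\Pi_{12}(X)=\sum_i (A_0^i)^{\mathsf T}XB_0^i$, $\Pi_{22}(X)=\sum_i (B_0^i)^{\mathsf T}XB_0^i$; $L_{\mathrm c}=L+\Pi_{12}$, $R_{\mathrm c}=R+\Pi_{22}$; $A_{\mathrm c}(X)=A-BR_{\mathrm c}(X)^{-1}L_{\mathrm c}(X)^{\mathsf T}$, $G_{\mathrm c}(X)=BR_{\mathrm c}(X)^{-1}B^{\mathsf T}$. A matrix is stable if all eigenvalues lie in the open left half-plane. Standing assumptions: (1) $R\succ0$, $\begin{bmatrix}Q&L\\L^{\mathsf T}&R\end{bmatrix}\succeq0$; (2) there is $F\in\mathbb{R}^{m\times n}$ with $\dot S=(A+BF)S+S(A+BF)^{\mathsf T}+\sum_{i=1}^r(A_0^i+B_0^iF)S(A_0^i+B_0^iF)^{\mathsf T}$ exponentially stable; (3) with $C^{\mathsf T}C=Q-LR^{-1}L^{\mathsf T}$, $C\in\mathbb{R}^{p\times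 n}$, and $\widetilde A_0^i=A_0^i-B_0^iR^{-1}L^{\mathsf T}$, there is $K\in\mathbb{R}^{n\times p}$ with $\dot S=(\widetilde A_0^0+KC)S+S(\widetilde A_0^0+KC)^{\mathsf T}+\sum_{i=1}^r\widetilde A_0^iS(\widetilde A_0^i)^{\mathsf T}$ exponentially stable; (4) $\mathcal N(Q-LR^{-1}L^{\mathsf T})\subseteq\mathcal N(L^{\mathsf T})\cap\bigcap_i\mathcal N(A_0^i)$; (5) $(A,B)$ stabilizable and $(Q-LR^{-1}L^{\mathsf T},A)$ detectable. *)

theory Defs
  imports "HOL-Analysis.Analysis"
begin

definition sym_mat :: "real^'n^'n \<Rightarrow> bool" where
  "sym_mat X \<longleftrightarrow> transpose X = X"

definition psd :: "real^'n^'n \<Rightarrow> bool" where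
  "psd X \<longleftrightarrow> transpose X = X \<and> (\<forall>x. 0 \<le> x \<bullet> (X *v x))"

definition pd :: "real^'n^'n \<Rightarrow> bool" where
  "pd X \<longleftrightarrow> transpose X = X \<and> (\<forall>x. x \<noteq> 0 \<longrightarrow> 0 < x \<bullet> (X *v x))"

definition cmat :: "real^'n^'m \<Rightarrow> complex^'n^'m" where
  "cmat M = (\<chi> i j. complex_of_real (M $ i $ j))"

definition stable :: "real^'n^'n \<Rightarrow> bool" where
  "stable M \<longleftrightarrow> (\<forall>(l::complex) (v::complex^'n). v \<noteq> 0 \<and> cmat M *v v = l *s v \<longrightarrow> Re l < 0)"

definition exp_stable_ode :: "(real^'n^'n \<Rightarrow> real^'n^'n) \<Rightarrow> bool" where
  "exp_stable_ode Lop \<longleftrightarrow> (\<exists>c \<beta>. \<beta> > 0 \<and>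
     (\<forall>S::real \<Rightarrow> real^'n^'n.
        (\<forall>t\<ge>0. sym_mat (S t) \<and> (S has_vector_derivative Lop (S t)) (at t within {0..}))
        \<longrightarrow> (\<forall>t\<ge>0. norm (S t) \<le> c * exp (- \<beta> * t) * norm (S 0))))"

definition blockmat :: "real^'b^'a \<Rightarrow> real^'d^'a \<Rightarrow> real^'b^'c \<Rightarrow> real^'d^'c \<Rightarrow> real^('b+'d)^('a+'c)" where
  "blockmat M11 M12 M21 M22 = (\<chi> i j. case i of
      Inl i' \<Rightarrow> (case j of Inl j' \<Rightarrow> M11 $ i' $ j' | Inr j' \<Rightarrow> M12 $ i' $ j')
    | Inr i' \<Rightarrow> (case j of Inl j' \<Rightarrow> M21 $ i' $ j' | Inr j' \<Rightarrow> M22 $ i' $ j'))"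

definition vstack :: "real^'b^'a \<Rightarrow> real^'b^'c \<Rightarrow> real^'b^('a+'c)" where
  "vstack M1 M2 = (\<chi> i. case i of Inl i' \<Rightarrow> M1 $ i' | Inr i' \<Rightarrow> M2 $ i')"

definition Pi11 :: "nat \<Rightarrow> (nat \<Rightarrow> real^'n^'n) \<Rightarrow> real^'n^'n \<Rightarrow> real^'n^'n" where
  "Pi11 r A0 X = (\<Sum>i=1..r. transpose (A0 i) ** X ** A0 i)"

definition Pi12 :: "nat \<Rightarrow> (nat \<Rightarrow> real^'n^'n) \<Rightarrow> (nat \<Rightarrow> real^'m^'n) \<Rightarrow> real^'n^'n \<Rightarrow> real^'m^'n" where
  "Pi12 r A0 B0 X = (\<Sum>i=1..r. transpose (A0 i) ** X ** B0 i)"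

definition Pi22 :: "nat \<Rightarrow> (nat \<Rightarrow> real^'m^'n) \<Rightarrow> real^'n^'n \<Rightarrow> real^'m^'m" where
  "Pi22 r B0 X = (\<Sum>i=1..r. transpose (B0 i) ** X ** B0 i)"

definition PiM :: "nat \<Rightarrow> (nat \<Rightarrow> real^'n^'n) \<Rightarrow> (nat \<Rightarrow> real^'m^'n) \<Rightarrow> real^'n^'n \<Rightarrow> real^('n+'m)^('n+'m)" where
  "PiM r A0 B0 X = blockmat (Pi11 r A0 X) (Pi12 r A0 B0 X) (transpose (Pi12 r A0 B0 X)) (Pi22 r B0 X)"

definition Lc :: "real^'m^'n \<Rightarrow> nat \<Rightarrow> (nat \<Rightarrow> real^'n^'n) \<Rightarrow> (nat \<Rightarrow> real^'m^'n) \<Rightarrow> real^'n^'n \<Rightarrow> real^'m^'n" where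
  "Lc L r A0 B0 X = L + Pi12 r A0 B0 X"

definition Rc :: "real^'m^'m \<Rightarrow> nat \<Rightarrow> (nat \<Rightarrow> real^'m^'n) \<Rightarrow> real^'n^'n \<Rightarrow> real^'m^'m" where
  "Rc R r B0 X = R + Pi22 r B0 X"

definition Ac :: "real^'n^'n \<Rightarrow> real^'m^'n \<Rightarrow> real^'m^'n \<Rightarrow> real^'m^'m \<Rightarrow> nat \<Rightarrow> (nat \<Rightarrow> real^'n^'n) \<Rightarrow> (nat \<Rightarrow> real^'m^'n) \<Rightarrow> real^'n^'n \<Rightarrow> real^'n^'n" where
  "Ac A B L R r A0 B0 X = A - B ** matrix_inv (Rc R r B0 X) ** transpose (Lc L r A0 B0 X)"

definition Gc :: "real^'m^'n \<Rightarrow> real^'m^'m \<Rightarrow> nat \<Rightarrow> (nat \<Rightarrow> real^'m^'n) \<Rightarrow> real^'n^'n \<Rightarrow> real^'n^'n" where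
  "Gc B R r B0 X = B ** matrix_inv (Rc R r B0 X) ** transpose B"

end

theory Submission
  imports Defs "Jordan_Normal_Form.Spectral_Radius"
begin

hide_const (open) Matrix.mat Matrix.vec Matrix.row Matrix.col
no_notation Matrix.scalar_prod (infix "\<bullet>" 70)

text \<open>Write \<open>N = A - B K\<close> with \<open>K = R\<^sub>k\<^sup>-\<^sup>1 S\<^sub>k\<^sup>T\<close>; then \<open>Ahat = N\<close> and \<open>Pk = [I; -K]\<close>, and the
  Lyapunov equation reads \<open>N\<^sup>T X + X N = -(PiHat + Mk)\<close> for \<open>X = X\<^sub>k\<^sub>+\<^sub>1\<close>, where both
  \<open>PiHat\<close> and \<open>Mk\<close> are positive semidefinite.

  If \<open>N\<close> is stable, \<open>X\<close> is positive semidefinite by the Lyapunov argument, run here in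
  discrete time: for the Cayley transform \<open>T = (I + N)(I - N)\<^sup>-\<^sup>1\<close> the form \<open>x\<^sup>T X x\<close> does not
  increase along \<open>x, T x, T\<^sup>2 x, \<dots>\<close>, and \<open>T\<^sup>k x \<longrightarrow> 0\<close> because the eigenvalues of \<open>T\<close> lie in the
  open unit disc.

  Conversely, let \<open>X\<close> be positive semidefinite and \<open>N v = \<lambda> v\<close> with \<open>Re \<lambda> \<ge> 0\<close>. Then
  \<open>v\<^sup>* (PiHat + Mk) v = -2 Re \<lambda> v\<^sup>* X v \<le> 0\<close> forces \<open>v\<^sup>* Mk v = 0\<close>, which by the kernel condition (4)
  means \<open>K v = 0\<close> and \<open>(Q - L R\<^sup>-\<^sup>1 L\<^sup>T) v = 0\<close>. Hence \<open>A v = \<lambda> v\<close> with \<open>v\<close> unobservable,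
  which detectability (5) rules out.\<close>

definition vcat :: "'f^'a \<Rightarrow> 'f^'c \<Rightarrow> 'f^('a+'c)" where
  "vcat x u = (\<chi> i. case i of Inl j \<Rightarrow> x $ j | Inr j \<Rightarrow> u $ j)"

lemma sum_UNIV_Plus:
  "(\<Sum>i\<in>(UNIV::('a::finite+'b::finite) set). g i) = (\<Sum>i\<in>UNIV. g (Inl i)) + (\<Sum>i\<in>UNIV. g (Inr i))"
  by (subst UNIV_Plus_UNIV[symmetric], subst sum.Plus) (simp_all add: comp_def)

lemma vcat_cases:
  obtains x u where "z = vcat x u"
  by (rule that[of "\<chi> i. z $ Inl i" "\<chi> i. z $ Inr i"])
    (simp add: Finite_Cartesian_Product.vec_eq_iff vcat_def split: sum.splits)

lemma vcat_eq_0_iff: "vcat x u = 0 \<longleftrightarrow> x = 0 \<and> u = 0"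
  by (auto simp: Finite_Cartesian_Product.vec_eq_iff vcat_def split: sum.splits)

lemma inner_vcat: "vcat x u \<bullet> vcat y w = x \<bullet> y + u \<bullet> (w::real^_)"
  by (simp add: inner_vec_def vcat_def sum_UNIV_Plus)

lemma vstack_mulv: "vstack M1 M2 *v x = vcat (M1 *v x) (M2 *v x)"
  by (auto simp: Finite_Cartesian_Product.vec_eq_iff vstack_def vcat_def matrix_vector_mult_def
      split: sum.splits)

lemma blockmat_mulv:
  "blockmat M11 M12 M21 M22 *v vcat x u = vcat (M11 *v x + M12 *v u) (M21 *v x + M22 *v u)"
  by (auto simp: Finite_Cartesian_Product.vec_eq_iff blockmat_def vcat_def matrix_vector_mult_def
      sum_UNIV_Plus split: sum.splits)

section \<open>Quadratic forms\<close>

lemma uminus_matrix_vector_mult: "(- M) *v x = - (M *v (x::'a::ring_1^_))"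
  by (simp add: Finite_Cartesian_Product.vec_eq_iff matrix_vector_mult_def sum_negf)

lemma matrix_vector_mult_uminus: "M *v (- x) = - (M *v (x::'a::ring_1^_))"
  by (simp add: Finite_Cartesian_Product.vec_eq_iff matrix_vector_mult_def sum_negf)

lemma sum_matrix_vector_mult: "(\<Sum>i\<in>S. f i) *v x = (\<Sum>i\<in>S. f i *v (x::real^_))"
  by (induction S rule: infinite_finite_induct) (auto simp: matrix_vector_mult_add_rdistrib)

lemma transpose_add: "transpose (M + N) = transpose M + transpose (N::real^_^_)"
  by (simp add: transpose_def Finite_Cartesian_Product.vec_eq_iff)

lemma transpose_sum: "transpose (\<Sum>i\<in>S. f i) = (\<Sum>i\<in>S. transpose (f i :: real^_^_))"
  by (simp add: transpose_def Finite_Cartesian_Product.vec_eq_iff sum_component)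

lemma transpose_congruence: "transpose (transpose P ** X ** Q) = transpose Q ** transpose X ** (P::real^_^_)"
  by (simp add: matrix_transpose_mul matrix_mul_assoc)

lemma inner_transpose_mulv: "x \<bullet> (transpose P *v y) = (P *v x) \<bullet> (y::real^_)"
  by (metis dot_lmul_matrix inner_commute transpose_matrix_vector)

lemma inner_congruence_mulv:
  "x \<bullet> ((transpose P ** M ** Q) *v y) = (P *v x) \<bullet> (M *v (Q *v (y::real^_)))"
  by (metis inner_transpose_mulv matrix_vector_mul_assoc)

lemma inner_sym_mulv_commute: "transpose M = M \<Longrightarrow> x \<bullet> (M *v y) = y \<bullet> (M *v (x::real^_))"
  by (metis inner_transpose_mulv inner_commute)

lemma inner_lyapunov_mulv:
  assumes "transpose X = X"
  shows "y \<bullet> ((transpose N ** X + X ** N) *v y) = 2 * ((N *v y) \<bullet> (X *v (y::real^'n)))"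
proof -
  have "y \<bullet> ((transpose N ** X + X ** N) *v y) = y \<bullet> (transpose N *v (X *v y)) + y \<bullet> (X *v (N *v y))"
    by (simp add: matrix_vector_mult_add_rdistrib inner_add_right matrix_vector_mul_assoc)
  also have "\<dots> = (N *v y) \<bullet> (X *v y) + (N *v y) \<bullet> (X *v y)"
    using inner_transpose_mulv inner_sym_mulv_commute[OF assms] by metis
  finally show ?thesis by simp
qed

lemma nonneg_form_eq_0_imp_mulv_eq_0:
  fixes M :: "real^'n^'n"
  assumes sym: "transpose M = M" and nonneg: "\<And>z. 0 \<le> z \<bullet> (M *v z)"
    and "x \<bullet> (M *v x) = 0"
  shows "M *v x = 0"
proof -
  define y where "y = M *v x"
  define c where "c = y \<bullet> y"
  define d where "d = y \<bullet> (M *v y)"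
  define t where "t = c / (d + 1)"
  \<comment> \<open>The form at \<open>x - t y\<close> equals \<open>t (t d - 2 c)\<close>, which is negative unless \<open>c = 0\<close>.\<close>
  have d_nonneg: "0 \<le> d" unfolding d_def by (rule nonneg)
  have c_nonneg: "0 \<le> c" unfolding c_def by simp
  have t_nonneg: "0 \<le> t" using c_nonneg d_nonneg by (simp add: t_def)
  have "x \<bullet> (M *v y) = c"
    using inner_sym_mulv_commute[OF sym, of x y] by (simp add: c_def y_def)
  moreover have "x \<bullet> y = 0" using assms(3) by (simp add: y_def)
  moreover have "M *v (x - t *\<^sub>R y) = y - t *\<^sub>R (M *v y)"
    by (simp add: y_def matrix_vector_mult_diff_distrib matrix_vector_mult_scaleR)
  ultimately have expand: "(x - t *\<^sub>R y) \<bullet> (M *v (x - t *\<^sub>R y)) = t * (t * d) - 2 * (t * c)"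
    by (simp add: inner_diff_left inner_diff_right c_def[symmetric] d_def[symmetric])
      (simp add: algebra_simps)
  have "t * d \<le> c" using c_nonneg d_nonneg by (simp add: t_def field_simps)
  then have "t * (t * d) \<le> t * c" using t_nonneg by (rule mult_left_mono)
  then have "t * c \<le> 0" using nonneg[of "x - t *\<^sub>R y"] expand by linarith
  then have "c * c \<le> 0" using d_nonneg by (simp add: t_def divide_le_0_iff)
  then have "c = 0" using c_nonneg by (simp add: mult_le_0_iff)
  then show ?thesis by (simp add: c_def y_def)
qed

lemma pd_mulv_eq_0_imp: "pd R \<Longrightarrow> R *v u = 0 \<Longrightarrow> u = 0"
  unfolding pd_def by (metis inner_zero_right less_irrefl)

lemma invertible_if_mulv_eq_0_imp:
  "(\<And>x. M *v x = 0 \<Longrightarrow> x = 0) \<Longrightarrow> invertible (M::real^'n^'n)"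
  using matrix_left_invertible_ker invertible_left_inverse by metis

lemma
  assumes "invertible M"
  shows matrix_inv_right: "M ** matrix_inv M = mat 1"
    and matrix_inv_left: "matrix_inv M ** M = mat 1"
proof -
  have "\<exists>M'. M ** M' = mat 1 \<and> M' ** M = mat 1"
    using assms by (simp add: invertible_def)
  then have "M ** matrix_inv M = mat 1 \<and> matrix_inv M ** M = mat 1"
    unfolding matrix_inv_def by (rule someI_ex)
  then show "M ** matrix_inv M = mat 1" "matrix_inv M ** M = mat 1" by auto
qed

section \<open>Complexification\<close>

definition cvec :: "real^'n \<Rightarrow> complex^'n" where
  "cvec x = (\<chi> j. complex_of_real (x $ j))"

definition Re_vec :: "complex^'n \<Rightarrow> real^'n" where
  "Re_vec v = (\<chi> j. Re (v $ j))"

definition Im_vec :: "complex^'n \<Rightarrow> real^'n" where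
  "Im_vec v = (\<chi> j. Im (v $ j))"

lemma cvec_nth [simp]: "cvec x $ j = complex_of_real (x $ j)"
  and Re_vec_nth [simp]: "Re_vec v $ j = Re (v $ j)"
  and Im_vec_nth [simp]: "Im_vec v $ j = Im (v $ j)"
  by (simp_all add: cvec_def Re_vec_def Im_vec_def)

lemma cvec_eq_0_iff: "cvec x = 0 \<longleftrightarrow> x = 0"
  by (simp add: Finite_Cartesian_Product.vec_eq_iff)

lemma cmat_mulv_cvec: "cmat M *v cvec x = cvec (M *v x)"
  by (simp add: cmat_def matrix_vector_mult_def Finite_Cartesian_Product.vec_eq_iff)

lemma Re_cmat_mulv: "Re ((cmat M *v v) $ i) = (M *v Re_vec v) $ i"
  and Im_cmat_mulv: "Im ((cmat M *v v) $ i) = (M *v Im_vec v) $ i"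
  by (simp_all add: cmat_def matrix_vector_mult_def Re_sum Im_sum)

lemma cmat_mulv_eq_0_iff: "cmat M *v v = 0 \<longleftrightarrow> M *v Re_vec v = 0 \<and> M *v Im_vec v = 0"
  by (auto simp: Finite_Cartesian_Product.vec_eq_iff complex_eq_iff
      simp flip: Re_cmat_mulv Im_cmat_mulv)

lemma cmat_mult: "cmat (M ** N) = cmat M ** cmat N"
  and cmat_add: "cmat (M + N') = cmat M + cmat N'"
  and cmat_diff: "cmat (M - N') = cmat M - cmat N'"
  and cmat_mat: "cmat (mat 1) = mat 1"
  by (simp_all add: cmat_def matrix_matrix_mult_def Finite_Cartesian_Product.mat_def
      Finite_Cartesian_Product.vec_eq_iff)

lemma cmat_scaleR_mulv: "cmat (c *\<^sub>R M) *v v = complex_of_real c *s (cmat M *v v)"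
  by (simp add: cmat_def matrix_vector_mult_def Finite_Cartesian_Product.vec_eq_iff
      sum_distrib_left algebra_simps)

lemma Re_Im_vec_eigenvector:
  assumes "cmat M *v v = l *s v"
  shows "M *v Re_vec v = Re l *\<^sub>R Re_vec v - Im l *\<^sub>R Im_vec v"
    and "M *v Im_vec v = Im l *\<^sub>R Re_vec v + Re l *\<^sub>R Im_vec v"
  by (simp_all add: Finite_Cartesian_Product.vec_eq_iff assms flip: Re_cmat_mulv Im_cmat_mulv)

lemma stable_imp_invertible_id_minus:
  assumes "stable N"
  shows "invertible (mat 1 - N)"
proof (rule invertible_if_mulv_eq_0_imp, rule ccontr)
  fix x assume "(mat 1 - N) *v x = 0" and "x \<noteq> 0"
  then have "cmat N *v cvec x = 1 *s cvec x" and "cvec x \<noteq> 0"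
    by (simp_all add: matrix_vector_mult_diff_rdistrib cmat_mulv_cvec cvec_eq_0_iff)
  with assms have "Re 1 < 0" unfolding stable_def by blast
  then show False by simp
qed

lemma stable_output_injection_eigenvalue:
  assumes "stable (A + H ** C)" and "v \<noteq> 0" and "cmat A *v v = l *s v" and "cmat C *v v = 0"
  shows "Re l < 0"
proof -
  have "cmat (A + H ** C) *v v = l *s v"
    using assms(3,4) by (simp add: cmat_add cmat_mult matrix_vector_mult_add_rdistrib
        flip: matrix_vector_mul_assoc)
  with assms(1,2) show ?thesis unfolding stable_def by blast
qed

section \<open>Powers of a matrix with spectrum inside the unit disc\<close>

primrec matpow :: "'a::semiring_1^'n^'n \<Rightarrow> nat \<Rightarrow> 'a^'n^'n" where
  "matpow M 0 = mat 1"
| "matpow M (Suc k) = matpow M k ** M"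

lemma cmat_matpow: "cmat (matpow M k) = matpow (cmat M) k"
  by (induction k) (simp_all add: cmat_mult cmat_mat)

lemma matpow_scaleR: "matpow (c *\<^sub>R M) k = c ^ k *\<^sub>R matpow (M::real^'n^'n) k"
  by (induction k) (simp_all add: Finite_Cartesian_Product.vec_eq_iff matrix_matrix_mult_def
      sum_distrib_left algebra_simps)

text \<open>Transfer to the matrices of \<open>Jordan_Normal_Form\<close>, indexed by \<open>{0..<CARD('n)}\<close>.\<close>

definition index_of :: "'n::finite \<Rightarrow> nat" where
  "index_of = (SOME h. bij_betw h UNIV {0..<CARD('n)})"

definition of_index :: "nat \<Rightarrow> 'n::finite" where
  "of_index = inv_into UNIV index_of"

lemma bij_index_of: "bij_betw (index_of :: 'n::finite \<Rightarrow> nat) UNIV {0..<CARD('n)}"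
proof -
  have "\<exists>h. bij_betw h (UNIV :: 'n set) {0..<CARD('n)}"
    using ex_bij_betw_finite_nat[of "UNIV :: 'n set"] by simp
  then show ?thesis unfolding index_of_def by (rule someI_ex)
qed

lemma index_of_less [simp]: "index_of (i::'n::finite) < CARD('n)"
  using bij_index_of bij_betwE by fastforce

lemma of_index_index_of [simp]: "of_index (index_of i) = i"
  unfolding of_index_def by (meson bij_betw_imp_inj_on bij_index_of inv_into_f_f UNIV_I)

lemma index_of_of_index [simp]: "k < CARD('n) \<Longrightarrow> index_of (of_index k :: 'n::finite) = k"
  unfolding of_index_def by (metis atLeastLessThan_iff bij_betw_def bij_index_of f_inv_into_f zero_le)

lemma sum_of_index: "(\<Sum>k = 0..<CARD('n). g (of_index k :: 'n::finite)) = (\<Sum>j\<in>UNIV. g j)"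
  unfolding of_index_def by (rule sum.reindex_bij_betw[OF bij_betw_inv_into[OF bij_index_of]])

definition jnf_mat :: "'a::comm_ring_1^'n::finite^'n \<Rightarrow> 'a Matrix.mat" where
  "jnf_mat C = Matrix.mat CARD('n) CARD('n) (\<lambda>(i, j). C $ of_index i $ of_index j)"

definition jnf_vec :: "'a^'n::finite \<Rightarrow> 'a Matrix.vec" where
  "jnf_vec v = Matrix.vec CARD('n) (\<lambda>i. v $ of_index i)"

lemma jnf_mat_carrier [simp]: "jnf_mat (C::'a::comm_ring_1^'n::finite^'n) \<in> carrier_mat CARD('n) CARD('n)"
  and dim_row_jnf_mat [simp]: "dim_row (jnf_mat C) = CARD('n)"
  and dim_col_jnf_mat [simp]: "dim_col (jnf_mat C) = CARD('n)"
  and dim_jnf_vec [simp]: "dim_vec (jnf_vec (v::'a^'n)) = CARD('n)"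
  by (simp_all add: jnf_mat_def jnf_vec_def)

lemma jnf_mat_index_of [simp]: "jnf_mat C $$ (index_of i, index_of j) = C $ i $ j"
  by (simp add: jnf_mat_def)

lemma jnf_mat_mult_jnf_vec: "jnf_mat C *\<^sub>v jnf_vec v = jnf_vec (C *v (v::'a::comm_ring_1^'n::finite))"
proof (rule eq_vecI)
  fix i assume "i < dim_vec (jnf_vec (C *v v))"
  then have "i < CARD('n)" by simp
  then show "(jnf_mat C *\<^sub>v jnf_vec v) $ i = jnf_vec (C *v v) $ i"
    using sum_of_index[where g = "\<lambda>j. C $ of_index i $ j * v $ j"]
    by (simp add: Matrix.scalar_prod_def jnf_mat_def jnf_vec_def matrix_vector_mult_def)
qed simp

lemma jnf_mat_mult: "jnf_mat (C ** D) = jnf_mat C * jnf_mat (D::'a::comm_ring_1^'n::finite^'n)"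
proof (rule eq_matI)
  fix i j assume "i < dim_row (jnf_mat C * jnf_mat D)" "j < dim_col (jnf_mat C * jnf_mat D)"
  then have "i < CARD('n)" "j < CARD('n)" by auto
  then show "jnf_mat (C ** D) $$ (i, j) = (jnf_mat C * jnf_mat D) $$ (i, j)"
    using sum_of_index[where g = "\<lambda>k. C $ of_index i $ k * D $ k $ of_index j"]
    by (simp add: Matrix.scalar_prod_def jnf_mat_def matrix_matrix_mult_def)
qed auto

lemma jnf_mat_one: "jnf_mat (mat 1 :: 'a::comm_ring_1^'n::finite^'n) = 1\<^sub>m CARD('n)"
  by (rule eq_matI) (auto simp: jnf_mat_def Finite_Cartesian_Product.mat_def, metis index_of_of_index)

lemma jnf_mat_matpow: "jnf_mat (matpow (C::'a::comm_ring_1^'n::finite^'n) k) = jnf_mat C ^\<^sub>m k"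
  by (induction k) (simp_all add: jnf_mat_one jnf_mat_mult)

lemma jnf_vec_inject: "jnf_vec v = jnf_vec w \<longleftrightarrow> v = (w::'a^'n::finite)"
proof
  assume eq: "jnf_vec v = jnf_vec w"
  show "v = w" unfolding Finite_Cartesian_Product.vec_eq_iff
  proof
    fix j :: 'n
    have "jnf_vec v $ index_of j = jnf_vec w $ index_of j" using eq by simp
    then show "v $ j = w $ j" by (simp add: jnf_vec_def)
  qed
qed simp

lemma jnf_vec_smult: "jnf_vec (c *s v) = c \<cdot>\<^sub>v jnf_vec (v::'a::comm_ring_1^'n::finite)"
  and jnf_vec_zero: "jnf_vec (0::'a::comm_ring_1^'n::finite) = 0\<^sub>v CARD('n)"
  by (rule eq_vecI; simp add: jnf_vec_def)+

lemma jnf_vec_onto: "w \<in> carrier_vec CARD('n) \<Longrightarrow> jnf_vec (\<chi> j. w $ index_of j :: 'a^'n::finite) = w"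
  by (rule eq_vecI) (auto simp: jnf_vec_def)

lemma eigenvalue_jnf_mat_iff:
  "eigenvalue (jnf_mat (C::'a::comm_ring_1^'n::finite^'n)) l \<longleftrightarrow> (\<exists>v. v \<noteq> 0 \<and> C *v v = l *s v)"
proof
  assume "eigenvalue (jnf_mat C) l"
  then obtain w where w: "w \<in> carrier_vec CARD('n)" "w \<noteq> 0\<^sub>v CARD('n)" "jnf_mat C *\<^sub>v w = l \<cdot>\<^sub>v w"
    unfolding eigenvalue_def eigenvector_def by auto
  define v :: "'a^'n" where "v = (\<chi> j. w $ index_of j)"
  have v: "jnf_vec v = w" unfolding v_def using w(1) by (rule jnf_vec_onto)
  have "v \<noteq> 0"
  proof
    assume "v = 0"
    then have "w = 0\<^sub>v CARD('n)" by (simp only: v[symmetric] jnf_vec_zero)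
    with w(2) show False ..
  qed
  moreover have "jnf_vec (C *v v) = jnf_vec (l *s v)"
    by (simp only: jnf_mat_mult_jnf_vec[symmetric] jnf_vec_smult v w(3))
  ultimately show "\<exists>v. v \<noteq> 0 \<and> C *v v = l *s v" unfolding jnf_vec_inject by blast
next
  assume "\<exists>v. v \<noteq> 0 \<and> C *v v = l *s v"
  then obtain v where v: "v \<noteq> 0" "C *v v = l *s v" by blast
  then have "jnf_vec v \<noteq> 0\<^sub>v CARD('n)"
    by (simp only: jnf_vec_zero[symmetric] jnf_vec_inject not_False_eq_True)
  moreover have "jnf_mat C *\<^sub>v jnf_vec v = l \<cdot>\<^sub>v jnf_vec v"
    by (simp only: jnf_mat_mult_jnf_vec v(2) jnf_vec_smult)
  ultimately have "eigenvector (jnf_mat C) (jnf_vec v) l"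
    unfolding eigenvector_def dim_row_jnf_mat carrier_vec_def by simp
  then show "eigenvalue (jnf_mat C) l" unfolding eigenvalue_def by blast
qed

lemma spectral_radius_jnf_mat_attained:
  fixes C :: "complex^'n::finite^'n"
  obtains l v where "v \<noteq> 0" "C *v v = l *s v" "spectral_radius (jnf_mat C) = cmod l"
proof -
  have "spectral_radius (jnf_mat C) \<in> norm ` spectrum (jnf_mat C)"
    by (rule spectral_radius_mem_max(1)[OF jnf_mat_carrier]) simp
  then obtain l where "eigenvalue (jnf_mat C) l" "spectral_radius (jnf_mat C) = cmod l"
    by (auto simp: spectrum_def)
  then show ?thesis using that by (auto simp: eigenvalue_jnf_mat_iff)
qed

lemma cmod_eigenvalue_le_spectral_radius:
  fixes C :: "complex^'n::finite^'n"
  assumes "v \<noteq> 0" "C *v v = l *s v"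
  shows "cmod l \<le> spectral_radius (jnf_mat C)"
proof (rule spectral_radius_mem_max(2)[OF jnf_mat_carrier])
  have "eigenvalue (jnf_mat C) l" using assms by (auto simp: eigenvalue_jnf_mat_iff)
  then show "cmod l \<in> norm ` spectrum (jnf_mat C)" by (simp add: spectrum_def)
qed simp

text \<open>The Jordan form only bounds the powers when the spectral radius is below 1; scaling by
  \<open>c > 1\<close> with \<open>c \<rho> < 1\<close> turns this bound into geometric decay.\<close>

lemma matpow_entries_geometric_bound:
  fixes M :: "real^'n^'n"
  assumes eig: "\<And>l v. v \<noteq> 0 \<Longrightarrow> cmat M *v v = l *s v \<Longrightarrow> cmod l < 1"
  obtains b q where "0 \<le> q" "q < 1" "\<And>k i j. \<bar>matpow M k $ (i::'n) $ (j::'n)\<bar> \<le> b * q ^ k"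
proof -
  define \<rho> where "\<rho> = spectral_radius (jnf_mat (cmat M))"
  obtain \<mu> v where "v \<noteq> 0" "cmat M *v v = \<mu> *s v" "\<rho> = cmod \<mu>"
    unfolding \<rho>_def by (rule spectral_radius_jnf_mat_attained)
  with eig have \<rho>: "0 \<le> \<rho>" "\<rho> < 1" by auto
  define c where "c = 2 / (1 + \<rho>)"
  have c: "1 < c" "c * \<rho> < 1" using \<rho> by (simp_all add: c_def field_simps)
  define J where "J = jnf_mat (cmat (c *\<^sub>R M))"
  have J: "J \<in> carrier_mat CARD('n) CARD('n)" by (simp add: J_def)
  have "spectral_radius J < 1"
  proof -
    obtain \<nu> w where w: "w \<noteq> 0" "cmat (c *\<^sub>R M) *v w = \<nu> *s w"
      and \<nu>: "spectral_radius J = cmod \<nu>"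
      unfolding J_def by (rule spectral_radius_jnf_mat_attained)
    have "complex_of_real c *s (cmat M *v w) = \<nu> *s w"
      using w(2) by (simp add: cmat_scaleR_mulv)
    then have "(1 / complex_of_real c) *s (complex_of_real c *s (cmat M *v w))
        = (1 / complex_of_real c) *s (\<nu> *s w)" by simp
    then have "cmat M *v w = (\<nu> / complex_of_real c) *s w"
      using c(1) by (simp add: vector_smult_assoc)
    then have "cmod (\<nu> / complex_of_real c) \<le> \<rho>"
      unfolding \<rho>_def using w(1) by (intro cmod_eigenvalue_le_spectral_radius)
    then show ?thesis using c \<nu> by (simp add: norm_divide field_simps)
  qed
  then obtain b where b: "\<And>k. norm_bound (J ^\<^sub>m k) b"
    using spectral_radius_jnf_norm_bound_less_1_upper_triangular[OF J] by blast
  have "\<bar>matpow M k $ i $ j\<bar> \<le> b * (1 / c) ^ k" for k i j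
  proof -
    have "dim_row (J ^\<^sub>m k) = CARD('n)" "dim_col (J ^\<^sub>m k) = CARD('n)"
      using carrier_matD[OF pow_carrier_mat[OF J]] by auto
    then have "norm ((J ^\<^sub>m k) $$ (index_of i, index_of j)) \<le> b"
      using b[of k] index_of_less unfolding norm_bound_def by metis
    moreover have "J ^\<^sub>m k = jnf_mat (cmat (c ^ k *\<^sub>R matpow M k))"
      by (simp add: J_def matpow_scaleR flip: jnf_mat_matpow cmat_matpow)
    ultimately have "c ^ k * \<bar>matpow M k $ i $ j\<bar> \<le> b"
      using c(1) by (simp add: cmat_def norm_mult norm_power)
    then show ?thesis
      using c(1) by (simp add: power_divide field_simps)
  qed
  with c \<open>0 \<le> \<rho>\<close> show ?thesis by (intro that[of "1 / c" b]) simp_all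
qed

lemma matpow_mulv_tendsto_0:
  fixes M :: "real^'n^'n"
  assumes "\<And>l v. v \<noteq> 0 \<Longrightarrow> cmat M *v v = l *s v \<Longrightarrow> cmod l < 1"
  shows "(\<lambda>k. matpow M k *v x) \<longlonglongrightarrow> 0"
proof -
  obtain b q where q: "0 \<le> q" "q < 1" and bound: "\<And>k i j. \<bar>matpow M k $ (i::'n) $ (j::'n)\<bar> \<le> b * q ^ k"
    by (rule matpow_entries_geometric_bound[of M]) (auto intro: assms)
  have "(\<lambda>k. matpow M k $ i $ j * x $ j) \<longlonglongrightarrow> 0" for i j
  proof (rule Lim_null_comparison)
    show "\<forall>\<^sub>F k in sequentially. norm (matpow M k $ i $ j * x $ j) \<le> b * q ^ k * \<bar>x $ j\<bar>"
      by (intro always_eventually allI) (simp add: abs_mult mult_right_mono bound)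
    show "(\<lambda>k. b * q ^ k * \<bar>x $ j\<bar>) \<longlonglongrightarrow> 0"
      using q by (intro tendsto_mult_left_zero tendsto_mult_right_zero LIMSEQ_power_zero) simp
  qed
  then show ?thesis
    by (intro vec_tendstoI) (simp add: matrix_vector_mult_def tendsto_null_sum)
qed

section \<open>Lyapunov inequalities\<close>

definition cayley :: "real^'n^'n \<Rightarrow> real^'n^'n" where
  "cayley N = (mat 1 + N) ** matrix_inv (mat 1 - N)"

lemma right_inverse_id_minus_mulv:
  fixes N Ni :: "'a::comm_ring_1^'n^'n"
  assumes "(mat 1 - N) ** Ni = mat 1"
  shows "Ni *v z - N *v (Ni *v z) = z" and "((mat 1 + N) ** Ni) *v z = Ni *v z + N *v (Ni *v z)"
proof -
  have "Ni *v z - N *v (Ni *v z) = ((mat 1 - N) ** Ni) *v z"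
    by (simp add: matrix_vector_mult_diff_rdistrib flip: matrix_vector_mul_assoc)
  then show "Ni *v z - N *v (Ni *v z) = z" by (simp add: assms)
  show "((mat 1 + N) ** Ni) *v z = Ni *v z + N *v (Ni *v z)"
    by (simp add: matrix_vector_mult_add_rdistrib flip: matrix_vector_mul_assoc)
qed

lemma cmod_less_1_if_Re_cayley_neg:
  assumes "Re ((l - 1) / (l + 1)) < 0"
  shows "cmod l < 1"
proof -
  have "(Re (l - 1) * Re (l + 1) + Im (l - 1) * Im (l + 1)) / ((Re (l + 1))\<^sup>2 + (Im (l + 1))\<^sup>2) < 0"
    using assms by (simp only: Re_divide)
  then have "Re (l - 1) * Re (l + 1) + Im (l - 1) * Im (l + 1) < 0"
    by (auto simp add: divide_less_0_iff not_sum_power2_lt_zero)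
  then have "(Re l)\<^sup>2 + (Im l)\<^sup>2 < 1"
    by (simp add: power2_eq_square algebra_simps)
  then have "(cmod l)\<^sup>2 < 1"
    by (simp add: cmod_power2)
  then show ?thesis by (simp add: power_less_one_iff abs_square_less_1)
qed

lemma cayley_eigenvalue_cmod_less_1:
  assumes "stable N" and "w \<noteq> 0" and "cmat (cayley N) *v w = l *s w"
  shows "cmod l < 1"
proof -
  define Ni where "Ni = matrix_inv (mat 1 - N)"
  have "(mat 1 - N) ** Ni = mat 1"
    unfolding Ni_def by (rule matrix_inv_right[OF stable_imp_invertible_id_minus[OF assms(1)]])
  then have "cmat ((mat 1 - N) ** Ni) = mat 1" by (simp add: cmat_mat)
  then have inv: "(mat 1 - cmat N) ** cmat Ni = mat 1" by (simp add: cmat_mult cmat_diff cmat_mat)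
  \<comment> \<open>\<open>y = (I - N)\<^sup>-\<^sup>1 w\<close> is an eigenvector of \<open>N\<close> for the eigenvalue \<open>(l - 1) / (l + 1)\<close>.\<close>
  define y where "y = cmat Ni *v w"
  define u where "u = cmat N *v y"
  have w: "w = y - u" and Tw: "cmat (cayley N) *v w = y + u"
    using right_inverse_id_minus_mulv[OF inv, of w]
    by (simp_all add: y_def u_def cayley_def Ni_def[symmetric] cmat_mult cmat_add cmat_mat)
  have y0: "y \<noteq> 0" using w assms(2) by (auto simp: u_def)
  have comp: "u $ i * (l + 1) = (l - 1) * y $ i" for i
    using arg_cong[OF trans[OF Tw[symmetric] assms(3)], of "\<lambda>v. v $ i"] w
    by (simp add: algebra_simps)
  have "l + 1 \<noteq> 0"
  proof
    assume "l + 1 = 0"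
    then have "y = 0" using comp by (simp add: Finite_Cartesian_Product.vec_eq_iff add_eq_0_iff2)
    with y0 show False ..
  qed
  then have "cmat N *v y = ((l - 1) / (l + 1)) *s y"
    using comp by (simp add: u_def[symmetric] Finite_Cartesian_Product.vec_eq_iff field_simps)
  with assms(1) y0 have "Re ((l - 1) / (l + 1)) < 0" unfolding stable_def by blast
  then show ?thesis by (rule cmod_less_1_if_Re_cayley_neg)
qed

text \<open>With \<open>z = y - N y\<close> one has \<open>cayley N z = y + N y\<close>, and the difference of the two forms is
  \<open>4 (N y)\<^sup>T X y = 2 y\<^sup>T (N\<^sup>T X + X N) y\<close>.\<close>

lemma cayley_form_le:
  assumes inv: "invertible (mat 1 - N)" and sym: "transpose X = X"
    and neg: "\<And>y. y \<bullet> ((transpose N ** X + X ** N) *v y) \<le> 0"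
  shows "(cayley N *v z) \<bullet> (X *v (cayley N *v z)) \<le> z \<bullet> (X *v z)"
proof -
  define y where "y = matrix_inv (mat 1 - N) *v z"
  define u where "u = N *v y"
  have z: "z = y - u" and Tz: "cayley N *v z = y + u"
    using right_inverse_id_minus_mulv[OF matrix_inv_right[OF inv], of z]
    by (simp_all add: y_def u_def cayley_def)
  have "(y + u) \<bullet> (X *v (y + u)) - (y - u) \<bullet> (X *v (y - u)) = 2 * (y \<bullet> (X *v u) + u \<bullet> (X *v y))"
    by (simp add: matrix_vector_right_distrib matrix_vector_mult_diff_distrib inner_add_left
        inner_add_right inner_diff_left inner_diff_right algebra_simps)
  also have "\<dots> = 2 * (y \<bullet> ((transpose N ** X + X ** N) *v y))"
    using inner_lyapunov_mulv[OF sym] inner_sym_mulv_commute[OF sym, of y u]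
    by (simp add: u_def)
  finally show ?thesis using neg[of y] z Tz by simp
qed

lemma lyapunov_stable_imp_form_nonneg:
  assumes st: "stable N" and sym: "transpose X = X"
    and neg: "\<And>y. y \<bullet> ((transpose N ** X + X ** N) *v y) \<le> 0"
  shows "0 \<le> x \<bullet> (X *v x)"
proof -
  let ?T = "cayley N" and ?V = "\<lambda>z. z \<bullet> (X *v z)"
  have step: "?V (?T *v z) \<le> ?V z" for z
    by (rule cayley_form_le[OF stable_imp_invertible_id_minus[OF st] sym neg])
  have decreasing: "?V (matpow ?T k *v z) \<le> ?V z" for k z
  proof (induction k arbitrary: z)
    case (Suc k)
    have "?V (matpow ?T (Suc k) *v z) = ?V (matpow ?T k *v (?T *v z))"
      by (simp add: matrix_vector_mul_assoc)
    also have "\<dots> \<le> ?V z" using Suc.IH[of "?T *v z"] step[of z] by linarith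
    finally show ?case .
  qed simp
  have "(\<lambda>k. matpow ?T k *v x) \<longlonglongrightarrow> 0"
    by (rule matpow_mulv_tendsto_0) (rule cayley_eigenvalue_cmod_less_1[OF st])
  then have "(\<lambda>k. ?V (matpow ?T k *v x)) \<longlonglongrightarrow> ?V 0"
    by (intro tendsto_inner bounded_linear.tendsto[OF matrix_vector_mul_bounded_linear])
  then show ?thesis using decreasing by (intro LIMSEQ_le_const2) auto
qed

lemma lyapunov_form_eigenvector:
  assumes sym: "transpose X = X" and "cmat N *v v = l *s v"
  defines "a \<equiv> Re_vec v" and "b \<equiv> Im_vec v"
  shows "a \<bullet> ((transpose N ** X + X ** N) *v a) + b \<bullet> ((transpose N ** X + X ** N) *v b)
    = 2 * Re l * (a \<bullet> (X *v a) + b \<bullet> (X *v b))"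
proof -
  have Na: "N *v a = Re l *\<^sub>R a - Im l *\<^sub>R b" and Nb: "N *v b = Im l *\<^sub>R a + Re l *\<^sub>R b"
    using Re_Im_vec_eigenvector[OF assms(2)] by (simp_all add: a_def b_def)
  have "a \<bullet> ((transpose N ** X + X ** N) *v a) + b \<bullet> ((transpose N ** X + X ** N) *v b)
      = 2 * ((N *v a) \<bullet> (X *v a)) + 2 * ((N *v b) \<bullet> (X *v b))"
    by (simp only: inner_lyapunov_mulv[OF sym])
  also have "\<dots> = 2 * Re l * (a \<bullet> (X *v a) + b \<bullet> (X *v b))"
    unfolding Na Nb using inner_sym_mulv_commute[OF sym, of a b]
    by (simp add: inner_diff_left inner_add_left algebra_simps)
  finally show ?thesis .
qed

lemma lyapunov_equation_form:
  assumes "transpose N ** X + X ** N + W + M = 0"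
  shows "y \<bullet> ((transpose N ** X + X ** N) *v y) = - (y \<bullet> (W *v y) + y \<bullet> (M *v (y::real^'n)))"
proof -
  have "transpose N ** X + X ** N + (W + M) = 0"
    using assms by (simp only: add.assoc)
  then have "transpose N ** X + X ** N = - (W + M)"
    by (simp only: eq_neg_iff_add_eq_0)
  then show ?thesis
    by (simp only: uminus_matrix_vector_mult inner_minus_right matrix_vector_mult_add_rdistrib
        inner_add_right)
qed

lemma lyapunov_psd_eigenvector_form_eq_0:
  assumes "psd X" and W: "\<And>y. 0 \<le> y \<bullet> (W *v y)" and M: "\<And>y. 0 \<le> y \<bullet> (M *v y)"
    and lyap: "transpose N ** X + X ** N + W + M = 0"
    and "cmat N *v v = l *s v" and "0 \<le> Re l"
  shows "Re_vec v \<bullet> (M *v Re_vec v) = 0" and "Im_vec v \<bullet> (M *v Im_vec v) = 0"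
proof -
  have sym: "transpose X = X" and X: "\<And>y. 0 \<le> y \<bullet> (X *v y)"
    using assms(1) by (simp_all add: psd_def)
  have "0 \<le> 2 * Re l * (Re_vec v \<bullet> (X *v Re_vec v) + Im_vec v \<bullet> (X *v Im_vec v))"
    using assms(6) X by simp
  then have "0 \<le> Re_vec v \<bullet> ((transpose N ** X + X ** N) *v Re_vec v)
      + Im_vec v \<bullet> ((transpose N ** X + X ** N) *v Im_vec v)"
    by (simp only: lyapunov_form_eigenvector[OF sym assms(5)])
  then show "Re_vec v \<bullet> (M *v Re_vec v) = 0" and "Im_vec v \<bullet> (M *v Im_vec v) = 0"
    unfolding lyapunov_equation_form[OF lyap]
    using W[of "Re_vec v"] W[of "Im_vec v"] M[of "Re_vec v"] M[of "Im_vec v"] by linarith+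
qed

section \<open>The closed loop of the Riccati iteration\<close>

lemma cost_form_eq_0_imp:
  fixes Q :: "real^'n^'n" and L :: "real^'m^'n" and R :: "real^'m^'m" and K :: "real^'n^'m"
  defines "P \<equiv> vstack (mat 1) (- K)" and "Qs \<equiv> Q - L ** matrix_inv R ** transpose L"
    and "Mb \<equiv> blockmat Q L (transpose L) R"
  assumes R: "pd R" and Mb: "psd Mb" and ker: "\<And>x. Qs *v x = 0 \<Longrightarrow> transpose L *v x = 0"
    and "y \<bullet> ((transpose P ** Mb ** P) *v y) = 0"
  shows "K *v y = 0" and "Qs *v y = 0"
proof -
  define u where "u = - (K *v y)"
  have "(P *v y) \<bullet> (Mb *v (P *v y)) = 0"
    using assms(7) by (simp only: inner_congruence_mulv)
  then have "Mb *v (P *v y) = 0"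
    using Mb unfolding psd_def by (intro nonneg_form_eq_0_imp_mulv_eq_0) auto
  then have e1: "Q *v y + L *v u = 0" and e2: "transpose L *v y + R *v u = 0"
    by (simp_all add: P_def Mb_def u_def vstack_mulv uminus_matrix_vector_mult blockmat_mulv vcat_eq_0_iff)
  have "invertible R" using pd_mulv_eq_0_imp[OF R] by (rule invertible_if_mulv_eq_0_imp)
  moreover have "transpose L *v y = - (R *v u)" using e2 by (simp add: eq_neg_iff_add_eq_0)
  ultimately have "matrix_inv R *v (transpose L *v y) = - u"
    by (simp add: matrix_vector_mult_uminus matrix_vector_mul_assoc matrix_inv_left)
  then have "Qs *v y = Q *v y + L *v u"
    by (simp add: Qs_def matrix_vector_mult_diff_rdistrib matrix_vector_mult_uminus
        flip: matrix_vector_mul_assoc)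
  then show Qs: "Qs *v y = 0" using e1 by simp
  then have "R *v u = 0" using e2 ker by simp
  then have "u = 0" by (rule pd_mulv_eq_0_imp[OF R])
  then show "K *v y = 0" by (simp add: u_def)
qed

lemma PiM_form_nonneg:
  assumes "psd X"
  shows "0 \<le> z \<bullet> (PiM r A0 B0 X *v z)"
proof -
  have sym: "transpose X = X" using assms by (simp add: psd_def)
  obtain x u where z: "z = vcat x u" by (rule vcat_cases)
  let ?w = "\<lambda>i. A0 i *v x + B0 i *v u"
  have "z \<bullet> (PiM r A0 B0 X *v z) = x \<bullet> (Pi11 r A0 X *v x) + x \<bullet> (Pi12 r A0 B0 X *v u)
        + u \<bullet> (transpose (Pi12 r A0 B0 X) *v x) + u \<bullet> (Pi22 r B0 X *v u)"
    by (simp add: z PiM_def blockmat_mulv inner_vcat inner_add_right)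
  also have "\<dots> = (\<Sum>i = 1..r. x \<bullet> ((transpose (A0 i) ** X ** A0 i) *v x)
        + x \<bullet> ((transpose (A0 i) ** X ** B0 i) *v u) + u \<bullet> ((transpose (B0 i) ** X ** A0 i) *v x)
        + u \<bullet> ((transpose (B0 i) ** X ** B0 i) *v u))"
    unfolding Pi11_def Pi12_def Pi22_def transpose_sum sum_matrix_vector_mult inner_sum_right
      transpose_congruence sym sum.distrib ..
  also have "\<dots> = (\<Sum>i = 1..r. ?w i \<bullet> (X *v ?w i))"
    by (rule sum.cong[OF refl]) (simp only: inner_congruence_mulv matrix_vector_right_distrib
        inner_add_left inner_add_right add.assoc)
  also have "\<dots> \<ge> 0" using assms by (intro sum_nonneg) (simp add: psd_def)
  finally show ?thesis .
qed

lemma closed_loop_stable_iff_psd: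
  fixes A Q X W H :: "real^'n^'n" and B L :: "real^'m^'n" and R :: "real^'m^'m" and K :: "real^'n^'m"
  defines "P \<equiv> vstack (mat 1) (- K)" and "Qs \<equiv> Q - L ** matrix_inv R ** transpose L"
    and "Mb \<equiv> blockmat Q L (transpose L) R"
  assumes R: "pd R" and Mb: "psd Mb" and ker: "\<And>x. Qs *v x = 0 \<Longrightarrow> transpose L *v x = 0"
    and detectable: "stable (A + H ** Qs)"
    and W: "\<And>y. 0 \<le> y \<bullet> (W *v y)" and sym: "transpose X = X"
    and lyap: "transpose (A - B ** K) ** X + X ** (A - B ** K) + W + transpose P ** Mb ** P = 0"
  shows "stable (A - B ** K) \<longleftrightarrow> psd X"
proof -
  let ?N = "A - B ** K" and ?M = "transpose P ** Mb ** P"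
  have M: "0 \<le> y \<bullet> (?M *v y)" for y
    using Mb unfolding psd_def inner_congruence_mulv by blast
  show ?thesis
  proof
    assume "stable ?N"
    moreover have "y \<bullet> ((transpose ?N ** X + X ** ?N) *v y) \<le> 0" for y
      unfolding lyapunov_equation_form[OF lyap] using W[of y] M[of y] by simp
    ultimately show "psd X"
      unfolding psd_def using sym lyapunov_stable_imp_form_nonneg by blast
  next
    assume "psd X"
    show "stable ?N" unfolding stable_def
    proof (intro allI impI, rule ccontr)
      fix l v assume ev: "v \<noteq> 0 \<and> cmat ?N *v v = l *s v" and "\<not> Re l < 0"
      then have "Re_vec v \<bullet> (?M *v Re_vec v) = 0" "Im_vec v \<bullet> (?M *v Im_vec v) = 0"
        using lyapunov_psd_eigenvector_form_eq_0[OF \<open>psd X\<close> W M lyap] by auto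
      then have "cmat K *v v = 0" "cmat Qs *v v = 0"
        using cost_form_eq_0_imp[OF R Mb[unfolded Mb_def] ker[unfolded Qs_def]]
        by (simp_all add: cmat_mulv_eq_0_iff P_def Qs_def Mb_def)
      moreover from this(1) ev have "cmat A *v v = l *s v"
        by (simp add: cmat_diff cmat_mult matrix_vector_mult_diff_rdistrib flip: matrix_vector_mul_assoc)
      ultimately have "Re l < 0"
        using stable_output_injection_eigenvalue[OF detectable] ev by blast
      with \<open>\<not> Re l < 0\<close> show False ..
    qed
  qed
qed

lemma Ac_minus_Gc_eq:
  assumes "transpose X = X"
  shows "Ac A B L R r A0 B0 X - Gc B R r B0 X ** X
    = A - B ** (matrix_inv (R + Pi22 r B0 X) ** transpose (X ** B + L + Pi12 r A0 B0 X))"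
proof -
  have "transpose (X ** B + L + Pi12 r A0 B0 X) = transpose B ** X + transpose (Lc L r A0 B0 X)"
    by (simp add: Lc_def transpose_add matrix_transpose_mul assms)
  then show ?thesis
    by (simp add: Ac_def Gc_def Rc_def matrix_add_ldistrib matrix_mul_assoc algebra_simps)
qed

theorem lemmaC2:
  fixes A Q :: "real^'n^'n" and B L :: "real^'m^'n" and R :: "real^'m^'m"
    and r :: nat and A0 :: "nat \<Rightarrow> real^'n^'n" and B0 :: "nat \<Rightarrow> real^'m^'n"
    and C :: "real^'n^'p"
    and Xk Xk1 :: "real^'n^'n"
  assumes A1_R: "pd R"
    and A1_blk: "psd (blockmat Q L (transpose L) R)"
    and A2: "\<exists>F::real^'n^'m. exp_stable_ode (\<lambda>S.
              (A + B ** F) ** S + S ** transpose (A + B ** F)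
              + (\<Sum>i=1..r. (A0 i + B0 i ** F) ** S ** transpose (A0 i + B0 i ** F)))"
    and A3_C: "transpose C ** C = Q - L ** matrix_inv R ** transpose L"
    and A3: "\<exists>K::real^'p^'n. exp_stable_ode (\<lambda>S.
              ((A - B ** matrix_inv R ** transpose L) + K ** C) ** S
              + S ** transpose ((A - B ** matrix_inv R ** transpose L) + K ** C)
              + (\<Sum>i=1..r. (A0 i - B0 i ** matrix_inv R ** transpose L) ** S
                           ** transpose (A0 i - B0 i ** matrix_inv R ** transpose L)))"
    and A4: "\<forall>x. (Q - L ** matrix_inv R ** transpose L) *v x = 0 \<longrightarrow>
               (transpose L *v x = 0 \<and> (\<forall>i\<in>{1..r}. A0 i *v x = 0))"
    and A5_stab: "\<exists>F::real^'n^'m. stable (A + B ** F)"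
    and A5_det: "\<exists>K::real^'n^'n. stable (A + K ** (Q - L ** matrix_inv R ** transpose L))"
    and Xk_psd: "psd Xk"
    and Xk1_sym: "transpose Xk1 = Xk1"
    and lyap: "let Rk = R + Pi22 r B0 Xk;
                   Sk = Xk ** B + L + Pi12 r A0 B0 Xk;
                   Ahat = A - B ** matrix_inv Rk ** transpose Sk;
                   Pk = vstack (mat 1 :: real^'n^'n) (- (matrix_inv Rk ** transpose Sk));
                   PiHat = transpose Pk ** PiM r A0 B0 Xk ** Pk;
                   Mk = transpose Pk ** blockmat Q L (transpose L) R ** Pk
               in transpose Ahat ** Xk1 + Xk1 ** Ahat + PiHat + Mk = 0"
  shows "stable (Ac A B L R r A0 B0 Xk - Gc B R r B0 Xk ** Xk) \<longleftrightarrow> psd Xk1"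
proof -
  \<comment> \<open>Only (1), the kernel condition on \<open>L\<^sup>T\<close> in (4) and detectability in (5) are needed.\<close>
  define K where "K = matrix_inv (R + Pi22 r B0 Xk) ** transpose (Xk ** B + L + Pi12 r A0 B0 Xk)"
  define P where "P = vstack (mat 1 :: real^'n^'n) (- K)"
  have closed_loop: "Ac A B L R r A0 B0 Xk - Gc B R r B0 Xk ** Xk = A - B ** K"
    unfolding K_def using Xk_psd by (intro Ac_minus_Gc_eq) (simp add: psd_def)
  obtain H where detectable: "stable (A + H ** (Q - L ** matrix_inv R ** transpose L))"
    using A5_det by blast
  have Pi_nonneg: "0 \<le> y \<bullet> ((transpose P ** PiM r A0 B0 Xk ** P) *v y)" for y
    unfolding inner_congruence_mulv by (rule PiM_form_nonneg[OF Xk_psd])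
  have lyap_K: "transpose (A - B ** K) ** Xk1 + Xk1 ** (A - B ** K)
      + transpose P ** PiM r A0 B0 Xk ** P + transpose P ** blockmat Q L (transpose L) R ** P = 0"
    using lyap unfolding Let_def K_def P_def matrix_mul_assoc .
  show ?thesis unfolding closed_loop
    by (rule closed_loop_stable_iff_psd[OF A1_R A1_blk _ detectable Pi_nonneg[unfolded P_def] Xk1_sym
          lyap_K[unfolded P_def]])
      (use A4 in blast)
qed

end
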